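(* Let $r_0,r_1,r_2\ge 1$ and $L=\mathfrak{g}(r_0,r_1,r_2)$. If $r_1\ge r_0$ or $r_1\ge r_2$, then $b(L)=r_0r_2$.
   Context: All Lie algebras are over an algebraically closed field $\mathbf{k}$ of characteristic zero. $\mathcal{P}(r_0,r_1,r_2)$ is the poset on $\{b_1,\dots,b_{r_0},m_1,\dots,m_{r_1},t_1,\dots,t_{r_2}\}$ whose strict relations are exactly $b_i\prec m_j$, $m_j\prec t_k$ and $b_i\prec t_k$ for all $i,j,k$ (i.e. $b_1,\dots,b_{r_0}\prec m_1,\dots,m_{r_1}\prec t_1,\dots,t_{r_2}$). $\mathfrak{g}(r_0,r_1,r_2)$ denotes the nilpotent Lie poset algebra $\mathfrak{g}^{\prec}(\mathcal{P}(r_0,r_1,r_2))$: the Lie algebra under the commutator bracket spanned by matrix units $E_{p,q}$ (rows/columns indexed by the poset) with $p\prec q$. The breadth of a Lie algebra $L$ is $b(L)=\max_{x\in L}\operatorname{rank}(\mathrm{ad}_x)$, where $\mathrm{ad}_x=[x,-]$. *)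

theory Defs
  imports "HOL-Computational_Algebra.Polynomial" "HOL-Library.Function_Algebras"
begin

type_synonym ('p, 'k) pmat = "'p \<Rightarrow> 'p \<Rightarrow> 'k"

definition mscale :: "'k::field \<Rightarrow> ('p, 'k) pmat \<Rightarrow> ('p, 'k) pmat" where
  "mscale c X = (\<lambda>p q. c * X p q)"

definition mmult :: "'p set \<Rightarrow> ('p, 'k::field) pmat \<Rightarrow> ('p, 'k) pmat \<Rightarrow> ('p, 'k) pmat" where
  "mmult P X Y = (\<lambda>p q. \<Sum>s\<in>P. X p s * Y s q)"

definition commutator :: "'p set \<Rightarrow> ('p, 'k::field) pmat \<Rightarrow> ('p, 'k) pmat \<Rightarrow> ('p, 'k) pmat" where
  "commutator P X Y = (\<lambda>p q. mmult P X Y p q - mmult P Y X p q)"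

text \<open>The nilpotent Lie poset algebra of a poset (P, prec) (prec the strict order):
  the span of the matrix units E_{p,q} with p prec q, i.e. all matrices supported on
  strict relations.\<close>
definition lie_poset_alg :: "'p set \<Rightarrow> ('p \<Rightarrow> 'p \<Rightarrow> bool) \<Rightarrow> ('p, 'k::field) pmat set" where
  "lie_poset_alg P prec = {X. \<forall>p q. X p q \<noteq> 0 \<longrightarrow> p \<in> P \<and> q \<in> P \<and> prec p q}"

definition ad :: "'p set \<Rightarrow> ('p, 'k::field) pmat \<Rightarrow> ('p, 'k) pmat \<Rightarrow> ('p, 'k) pmat" where
  "ad P X = commutator P X"

definition ad_rank :: "'p set \<Rightarrow> ('p, 'k::field) pmat set \<Rightarrow> ('p, 'k) pmat \<Rightarrow> nat" where
  "ad_rank P L X = vector_space.dim mscale (ad P X ` L)"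

definition breadth :: "'p set \<Rightarrow> ('p, 'k::field) pmat set \<Rightarrow> nat" where
  "breadth P L = Max {ad_rank P L X | X. X \<in> L}"

text \<open>The poset P(r0,r1,r2): elements (l,i) with level l \<in> {0,1,2} and i < r_l
  ((0,i) = b_(i+1), (1,j) = m_(j+1), (2,k) = t_(k+1)); (l,i) \<prec> (l',j) iff l < l'.\<close>
definition P3 :: "nat \<Rightarrow> nat \<Rightarrow> nat \<Rightarrow> (nat \<times> nat) set" where
  "P3 r0 r1 r2 = {(l, i). (l = 0 \<and> i < r0) \<or> (l = 1 \<and> i < r1) \<or> (l = 2 \<and> i < r2)}"

definition prec3 :: "nat \<times> nat \<Rightarrow> nat \<times> nat \<Rightarrow> bool" where
  "prec3 x y = (fst x < fst y)"

definition g3 :: "nat \<Rightarrow> nat \<Rightarrow> nat \<Rightarrow> (nat \<times> nat, 'k::field) pmat set" where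
  "g3 r0 r1 r2 = lie_poset_alg (P3 r0 r1 r2) prec3"

end

theory Submission
  imports Defs
begin

text \<open>Every product of two elements of \<open>\<g>(r\<^sub>0,r\<^sub>1,r\<^sub>2)\<close> passes through a chain of
  length two, so all brackets live in the span of the units \<open>E\<^bsub>b\<^sub>i,t\<^sub>k\<^esub>\<close>, which has
  dimension \<open>r\<^sub>0r\<^sub>2\<close>. Conversely, if \<open>r\<^sub>0 \<le> r\<^sub>1\<close> then \<open>x = \<Sum>\<^sub>i E\<^bsub>b\<^sub>i,m\<^sub>i\<^esub>\<close> satisfies
  \<open>[x, E\<^bsub>m\<^sub>i,t\<^sub>k\<^esub>] = E\<^bsub>b\<^sub>i,t\<^sub>k\<^esub>\<close>, and if \<open>r\<^sub>2 \<le> r\<^sub>1\<close> then \<open>x = \<Sum>\<^sub>k E\<^bsub>m\<^sub>k,t\<^sub>k\<^esub>\<close>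
  satisfies \<open>[x, -E\<^bsub>b\<^sub>i,m\<^sub>k\<^esub>] = E\<^bsub>b\<^sub>i,t\<^sub>k\<^esub>\<close>; either way \<open>ad\<^sub>x\<close> attains rank \<open>r\<^sub>0r\<^sub>2\<close>.\<close>

interpretation V: vector_space "mscale :: 'k::field \<Rightarrow> ('p,'k) pmat \<Rightarrow> ('p,'k) pmat"
  by unfold_locales (auto simp: mscale_def fun_eq_iff algebra_simps)

lemma sum_pmat_apply: "(\<Sum>v\<in>S. f v) p q = (\<Sum>v\<in>S. (f v :: ('p,'k::field) pmat) p q)"
  by (induction S rule: infinite_finite_induct) auto

definition munit :: "'p \<Rightarrow> 'p \<Rightarrow> ('p, 'k::field) pmat" where
  "munit a b = (\<lambda>p q. if p = a \<and> q = b then 1 else 0)"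

lemma munit_eq_iff: "munit a b = (munit a' b' :: ('p,'k::field) pmat) \<longleftrightarrow> a = a' \<and> b = b'"
  by (auto simp: munit_def fun_eq_iff)

lemma munit_apply: "munit a b p q = (if p = a \<and> q = b then 1 else 0)"
  by (simp add: munit_def)

lemma card_munits: "card (case_prod munit ` S :: ('p,'k::field) pmat set) = card S"
  by (rule card_image) (auto simp: inj_on_def munit_eq_iff)

lemma independent_munits: "V.independent (case_prod munit ` S :: ('p,'k::field) pmat set)"
  unfolding V.independent_explicit_finite_subsets
proof (intro allI impI ballI)
  fix T :: "('p,'k) pmat set" and u v
  assume T: "T \<subseteq> case_prod munit ` S" "finite T"
    and zero: "(\<Sum>w\<in>T. mscale (u w) w) = 0" and "v \<in> T"
  then obtain a b where v: "v = munit a b" by auto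
  have "(\<Sum>w\<in>T. u w * w a b) = (\<Sum>w\<in>T. if w = v then u w else 0)"
  proof (rule sum.cong[OF refl])
    fix w assume "w \<in> T"
    then obtain a' b' where "w = munit a' b'" using T by auto
    then show "u w * w a b = (if w = v then u w else 0)"
      using v by (auto simp: munit_apply munit_eq_iff)
  qed
  moreover have "(\<Sum>w\<in>T. u w * w a b) = 0"
    using fun_cong[OF fun_cong[OF zero, of a], of b] by (simp add: sum_pmat_apply mscale_def)
  ultimately show "u v = 0" using T \<open>v \<in> T\<close> by simp
qed

lemma in_span_munits:
  fixes Z :: "('p,'k::field) pmat"
  assumes "finite S" and "\<And>p q. Z p q \<noteq> 0 \<Longrightarrow> (p, q) \<in> S"
  shows "Z \<in> V.span (case_prod munit ` S)"
proof -
  have "Z = (\<Sum>(a,b)\<in>S. mscale (Z a b) (munit a b))"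
  proof (intro ext)
    fix p q
    have "(\<Sum>(a,b)\<in>S. mscale (Z a b) (munit a b)) p q = (\<Sum>x\<in>S. if x = (p,q) then Z p q else 0)"
      by (auto simp: sum_pmat_apply mscale_def munit_apply split_def intro!: sum.cong)
    also have "\<dots> = Z p q"
      using assms by (auto simp: sum.delta)
    finally show "Z p q = (\<Sum>(a,b)\<in>S. mscale (Z a b) (munit a b)) p q" by simp
  qed
  also have "\<dots> \<in> V.span (case_prod munit ` S)"
    by (intro V.span_sum) (auto intro: V.span_scale V.span_base)
  finally show ?thesis .
qed

lemma mmult_munit_right:
  assumes "finite P" "a \<in> P"
  shows "mmult P X (munit a b) p q = (if q = b then X p a else 0)"
  using assms by (simp add: mmult_def munit_apply if_distrib cong: if_cong)

lemma mmult_munit_left: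
  assumes "finite P" "b \<in> P"
  shows "mmult P (munit a b) X p q = (if p = a then X b q else 0)"
proof -
  have "mmult P (munit a b) X p q = (\<Sum>s\<in>P. if s = b \<and> p = a then X s q else 0)"
    unfolding mmult_def munit_apply by (rule sum.cong) auto
  then show ?thesis using assms by (simp add: sum.delta)
qed

lemma commutator_munit_right:
  assumes "finite P" "a \<in> P" "b \<in> P"
  shows "commutator P X (munit a b) p q = (if q = b then X p a else 0) - (if p = a then X b q else 0)"
  using assms by (simp add: commutator_def mmult_munit_left mmult_munit_right)

lemma commutator_mscale_right:
  "commutator P X (mscale c Y) = mscale c (commutator P X Y)"
  by (simp add: commutator_def mmult_def mscale_def fun_eq_iff sum_distrib_left algebra_simps)

lemma munit_in_lie_poset_alg:
  assumes "a \<in> P" "b \<in> P" "prec a b"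
  shows "munit a b \<in> lie_poset_alg P prec"
  using assms by (auto simp: lie_poset_alg_def munit_apply split: if_splits)

lemma mscale_in_lie_poset_alg: "X \<in> lie_poset_alg P prec \<Longrightarrow> mscale c X \<in> lie_poset_alg P prec"
  by (auto simp: lie_poset_alg_def mscale_def)

lemma mmult_lie_poset_alg_nonzero:
  assumes "X \<in> lie_poset_alg P prec" "Y \<in> lie_poset_alg P prec" "mmult P X Y p q \<noteq> 0"
  shows "\<exists>s. p \<in> P \<and> q \<in> P \<and> prec p s \<and> prec s q"
proof -
  obtain s where "X p s * Y s q \<noteq> 0"
    using assms(3) unfolding mmult_def by (metis (mono_tags, lifting) sum.neutral)
  then have "X p s \<noteq> 0" "Y s q \<noteq> 0" by auto
  then show ?thesis using assms(1,2) unfolding lie_poset_alg_def by (auto intro!: exI[of _ s])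
qed

lemma commutator_lie_poset_alg_nonzero:
  assumes "X \<in> lie_poset_alg P prec" "Y \<in> lie_poset_alg P prec" "commutator P X Y p q \<noteq> 0"
  shows "\<exists>s. p \<in> P \<and> q \<in> P \<and> prec p s \<and> prec s q"
proof -
  have "mmult P X Y p q \<noteq> 0 \<or> mmult P Y X p q \<noteq> 0"
    using assms(3) by (auto simp: commutator_def)
  then show ?thesis using assms(1,2) mmult_lie_poset_alg_nonzero by metis
qed

lemma breadth_eqI:
  assumes "\<And>X. X \<in> L \<Longrightarrow> ad_rank P L X \<le> n" and "X\<^sub>0 \<in> L" and "ad_rank P L X\<^sub>0 = n"
  shows "breadth P L = n"
  unfolding breadth_def
proof (rule Max_eqI)
  have "{ad_rank P L X | X. X \<in> L} \<subseteq> {..n}" using assms(1) by auto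
  then show "finite {ad_rank P L X | X. X \<in> L}" by (rule finite_subset) simp
qed (use assms in auto)

lemma finite_P3: "finite (P3 r0 r1 r2)"
proof -
  have "P3 r0 r1 r2 \<subseteq> {..2} \<times> {..<r0+r1+r2}" by (auto simp: P3_def)
  then show ?thesis by (rule finite_subset) simp
qed

definition corner :: "nat \<Rightarrow> nat \<Rightarrow> ((nat \<times> nat) \<times> (nat \<times> nat)) set" where
  "corner r0 r2 = Pair 0 ` {..<r0} \<times> Pair 2 ` {..<r2}"

lemma card_corner: "card (corner r0 r2) = r0 * r2"
  by (simp add: corner_def card_cartesian_product card_image inj_on_def)

lemma two_step_chain_P3:
  assumes "p \<in> P3 r0 r1 r2" "q \<in> P3 r0 r1 r2" "prec3 p s" "prec3 s q"
  shows "(p, q) \<in> corner r0 r2"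
  using assms by (auto simp: P3_def prec3_def corner_def)

lemma ad_g3_subset_span_corner:
  assumes "X \<in> g3 r0 r1 r2"
  shows "ad (P3 r0 r1 r2) X ` g3 r0 r1 r2 \<subseteq> V.span (case_prod munit ` corner r0 r2)"
proof
  fix Z assume "Z \<in> ad (P3 r0 r1 r2) X ` g3 r0 r1 r2"
  then obtain Y where "Y \<in> g3 r0 r1 r2" "Z = commutator (P3 r0 r1 r2) X Y" by (auto simp: ad_def)
  have "(p, q) \<in> corner r0 r2" if "Z p q \<noteq> 0" for p q
    using commutator_lie_poset_alg_nonzero[of X _ prec3 Y p q] two_step_chain_P3[of p r0 r1 r2 q]
      assms \<open>Y \<in> g3 r0 r1 r2\<close> that
    unfolding g3_def \<open>Z = _\<close> by blast
  then show "Z \<in> V.span (case_prod munit ` corner r0 r2)"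
    by (intro in_span_munits) (simp_all add: corner_def)
qed

lemma ad_rank_g3_le:
  assumes "X \<in> g3 r0 r1 r2"
  shows "ad_rank (P3 r0 r1 r2) (g3 r0 r1 r2) X \<le> r0 * r2"
proof -
  have "ad_rank (P3 r0 r1 r2) (g3 r0 r1 r2) X
      \<le> card (case_prod munit ` corner r0 r2 :: (nat \<times> nat, 'a) pmat set)"
    unfolding ad_rank_def
    by (intro V.dim_le_card ad_g3_subset_span_corner assms) (simp add: corner_def)
  then show ?thesis by (simp add: card_munits card_corner)
qed

lemma ad_rank_g3_eq:
  assumes "X \<in> g3 r0 r1 r2"
    and "case_prod munit ` corner r0 r2 \<subseteq> ad (P3 r0 r1 r2) X ` g3 r0 r1 r2"
  shows "ad_rank (P3 r0 r1 r2) (g3 r0 r1 r2) X = r0 * r2"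
  unfolding ad_rank_def
  by (rule V.dim_unique[OF assms(2) ad_g3_subset_span_corner[OF assms(1)] independent_munits])
     (simp add: card_munits card_corner)

definition bottom_matching :: "nat \<Rightarrow> (nat \<times> nat, 'k::field) pmat" where
  "bottom_matching r0 = (\<lambda>p q. if fst p = 0 \<and> q = (1, snd p) \<and> snd p < r0 then 1 else 0)"

definition top_matching :: "nat \<Rightarrow> (nat \<times> nat, 'k::field) pmat" where
  "top_matching r2 = (\<lambda>p q. if fst p = 1 \<and> q = (2, snd p) \<and> snd p < r2 then 1 else 0)"

lemma bottom_matching_in_g3: "r0 \<le> r1 \<Longrightarrow> bottom_matching r0 \<in> g3 r0 r1 r2"
  by (auto simp: g3_def lie_poset_alg_def prec3_def P3_def bottom_matching_def split: if_splits)

lemma top_matching_in_g3: "r2 \<le> r1 \<Longrightarrow> top_matching r2 \<in> g3 r0 r1 r2"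
  by (auto simp: g3_def lie_poset_alg_def prec3_def P3_def top_matching_def split: if_splits)

lemma corner_subset_ad_bottom_matching:
  assumes "r0 \<le> r1"
  shows "case_prod munit ` corner r0 r2 \<subseteq> ad (P3 r0 r1 r2) (bottom_matching r0) ` g3 r0 r1 r2"
proof
  fix E assume "E \<in> case_prod munit ` corner r0 r2"
  then obtain i k where E: "E = munit (0, i) (2, k)" and "i < r0" "k < r2"
    by (auto simp: corner_def)
  then have P: "(1, i) \<in> P3 r0 r1 r2" "(2, k) \<in> P3 r0 r1 r2"
    using assms by (auto simp: P3_def)
  then have "E = commutator (P3 r0 r1 r2) (bottom_matching r0) (munit (1, i) (2, k))"
    using E \<open>i < r0\<close> by (auto simp: fun_eq_iff commutator_munit_right finite_P3
        bottom_matching_def munit_apply)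
  moreover have "munit (1, i) (2, k) \<in> g3 r0 r1 r2"
    using P unfolding g3_def by (auto simp: prec3_def intro: munit_in_lie_poset_alg)
  ultimately show "E \<in> ad (P3 r0 r1 r2) (bottom_matching r0) ` g3 r0 r1 r2"
    unfolding ad_def by blast
qed

lemma corner_subset_ad_top_matching:
  assumes "r2 \<le> r1"
  shows "case_prod munit ` corner r0 r2 \<subseteq> ad (P3 r0 r1 r2) (top_matching r2) ` g3 r0 r1 r2"
proof
  fix E assume "E \<in> case_prod munit ` corner r0 r2"
  then obtain i k where E: "E = munit (0, i) (2, k)" and "i < r0" "k < r2"
    by (auto simp: corner_def)
  then have P: "(0, i) \<in> P3 r0 r1 r2" "(1, k) \<in> P3 r0 r1 r2"
    using assms by (auto simp: P3_def)
  have "commutator (P3 r0 r1 r2) (top_matching r2) (mscale (-1) (munit (0, i) (1, k)))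
      = mscale (-1) (commutator (P3 r0 r1 r2) (top_matching r2) (munit (0, i) (1, k)))"
    by (rule commutator_mscale_right)
  also have "commutator (P3 r0 r1 r2) (top_matching r2) (munit (0, i) (1, k)) = mscale (-1) E"
    using P E \<open>k < r2\<close> by (auto simp: fun_eq_iff commutator_munit_right finite_P3 mscale_def
        top_matching_def munit_apply)
  finally have "E = commutator (P3 r0 r1 r2) (top_matching r2) (mscale (-1) (munit (0, i) (1, k)))"
    by (simp add: mscale_def)
  moreover have "mscale (-1) (munit (0, i) (1, k)) \<in> g3 r0 r1 r2"
    using P unfolding g3_def
    by (intro mscale_in_lie_poset_alg munit_in_lie_poset_alg) (auto simp: prec3_def)
  ultimately show "E \<in> ad (P3 r0 r1 r2) (top_matching r2) ` g3 r0 r1 r2"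
    unfolding ad_def by blast
qed

theorem theorem3:
  fixes r0 r1 r2 :: nat
  assumes "r0 \<ge> 1" and "r1 \<ge> 1" and "r2 \<ge> 1"
    and "r1 \<ge> r0 \<or> r1 \<ge> r2"
  shows "breadth (P3 r0 r1 r2) (g3 r0 r1 r2 :: (nat \<times> nat, 'k::{alg_closed_field, field_char_0}) pmat set)
         = r0 * r2"
proof -
  obtain X :: "(nat \<times> nat, 'k) pmat" where "X \<in> g3 r0 r1 r2"
    and "case_prod munit ` corner r0 r2 \<subseteq> ad (P3 r0 r1 r2) X ` g3 r0 r1 r2"
    using assms(4) bottom_matching_in_g3 corner_subset_ad_bottom_matching
      top_matching_in_g3 corner_subset_ad_top_matching by metis
  then show ?thesis
    by (intro breadth_eqI ad_rank_g3_le ad_rank_g3_eq)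
qed

end
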